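(* Let $S$ be a set with $0\in S$. For every space $X\in\{V_S,\overline{V_S},\widehat{V_S},\overline{\overline{V_S}}\}$ the canonical projection $\pi_X\colon\mathrm{Aut}(X)\to\mathrm{Aut}(\mathbb Q_{\ge0})$, $f\mapsto D_f$, admits a group homomorphism $s_X\colon\mathrm{Aut}(\mathbb Q_{\ge0})\to\mathrm{Aut}(X)$ with $\pi_X\circ s_X=\mathrm{id}$. Moreover, $s_X\colon\mathrm{Aut}(\mathbb Q_{\ge0})\to\mathrm{Aut}(X)$ is continuous for $X=V_S$, and $s_X\colon\mathrm{Aut}(\mathbb Q_{\ge0})\to\mathrm{Aut}_M(X)$ is continuous for $X=\overline{V_S}$.
   Context: For $f\colon\mathbb Q_{>0}\to S$ let $\mathrm{supp}(f)=\{x:f(x)\ne0\}$. $V_S$: all $f$ with finite support; $\overline{V_S}$: all $f$ whose support is finite or a decreasing sequence converging to $0$; $\widehat{V_S}$: support finite or a decreasing sequence; $\overline{\overline{V_S}}$: support is conversely well-ordered (a decreasing countable ordinal). Each is a two-sorted ultrametric space with distance set $\mathbb Q_{\ge0}$ and $d(f,g)=\max\{r\in\mathbb Q_{>0}:f(r)\ne g(r)\}$ for $f\ne g$. A dc-automorphism of $X$ is a bijection $f$ of $X$ with an order automorphism $D_f$ of $\mathbb Q_{\ge0}$ such that $d(f(x),f(y))=D_f(d(x,y))$. $\mathrm{Aut}(X)$: group of dc-automorphisms with topology of pointwise convergence on both sorts (basic neighbourhoods: agree with $f$ on finitely many points and finitely many distances). $\mathrm{Aut}_M(X)$: same group with basic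 neighbourhoods $\{g:d(g(x),f(x))<r\ \forall x\in A\}$, $A$ finite, $r\in\mathbb Q_{>0}$. $\mathrm{Aut}(\mathbb Q_{\ge0})$: order automorphisms with pointwise convergence topology. *)

theory Defs
  imports "HOL-Analysis.Analysis" "HOL-Algebra.Group"
begin

text \<open>Points of the spaces: functions rat => a which are 0 on non-positive rationals
  (so they represent functions on the positive rationals) and take values in S on positive rationals.\<close>

definition supp :: "(rat \<Rightarrow> 'a::zero) \<Rightarrow> rat set" where
  "supp f = {x. 0 < x \<and> f x \<noteq> 0}"

definition Sfun :: "'a::zero set \<Rightarrow> (rat \<Rightarrow> 'a) set" where
  "Sfun S = {f. (\<forall>r. 0 < r \<longrightarrow> f r \<in> S) \<and> (\<forall>r. r \<le> 0 \<longrightarrow> f r = 0)}"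

definition V :: "'a::zero set \<Rightarrow> (rat \<Rightarrow> 'a) set" where
  "V S = {f \<in> Sfun S. finite (supp f)}"

definition Vbar :: "'a::zero set \<Rightarrow> (rat \<Rightarrow> 'a) set" where
  "Vbar S = {f \<in> Sfun S. finite (supp f) \<or>
     (\<exists>a::nat \<Rightarrow> rat. (\<forall>n. a (Suc n) < a n) \<and> range a = supp f \<and>
        (\<lambda>n. real_of_rat (a n)) \<longlonglongrightarrow> 0)}"

definition Vhat :: "'a::zero set \<Rightarrow> (rat \<Rightarrow> 'a) set" where
  "Vhat S = {f \<in> Sfun S. finite (supp f) \<or>
     (\<exists>a::nat \<Rightarrow> rat. (\<forall>n. a (Suc n) < a n) \<and> range a = supp f)}"

text \<open>double closure: support conversely well-ordered (the reverse order on it is well-founded).\<close>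
definition Vbb :: "'a::zero set \<Rightarrow> (rat \<Rightarrow> 'a) set" where
  "Vbb S = {f \<in> Sfun S. wf {(x, y). x \<in> supp f \<and> y \<in> supp f \<and> y < x}}"

definition vdist :: "(rat \<Rightarrow> 'a) \<Rightarrow> (rat \<Rightarrow> 'a) \<Rightarrow> rat" where
  "vdist f g = (if f = g then 0 else (GREATEST r. 0 < r \<and> f r \<noteq> g r))"

definition autQ :: "(rat \<Rightarrow> rat) set" where
  "autQ = {D. bij_betw D {0..} {0..} \<and> strict_mono_on {0..} D \<and> (\<forall>x<0. D x = x)}"

definition dcAut :: "(rat \<Rightarrow> 'a) set \<Rightarrow> (((rat \<Rightarrow> 'a) \<Rightarrow> (rat \<Rightarrow> 'a)) \<times> (rat \<Rightarrow> rat)) set" where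
  "dcAut X = {(f, D). bij_betw f X X \<and> (\<forall>x. x \<notin> X \<longrightarrow> f x = x) \<and> D \<in> autQ \<and>
     (\<forall>x\<in>X. \<forall>y\<in>X. vdist (f x) (f y) = D (vdist x y))}"

definition autQ_group :: "(rat \<Rightarrow> rat) monoid" where
  "autQ_group = \<lparr>carrier = autQ, mult = (\<circ>), one = id\<rparr>"

definition dcAut_group :: "(rat \<Rightarrow> 'a) set \<Rightarrow>
    (((rat \<Rightarrow> 'a) \<Rightarrow> (rat \<Rightarrow> 'a)) \<times> (rat \<Rightarrow> rat)) monoid" where
  "dcAut_group X = \<lparr>carrier = dcAut X, mult = (\<lambda>p q. (fst p \<circ> fst q, snd p \<circ> snd q)), one = (id, id)\<rparr>"

definition autQ_top :: "(rat \<Rightarrow> rat) topology" where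
  "autQ_top = topology_generated_by
     {{\<psi> \<in> autQ. \<forall>a\<in>A. \<psi> a = \<phi> a} | \<phi> A. \<phi> \<in> autQ \<and> finite A \<and> A \<subseteq> {0..}}"

definition dcAut_top :: "(rat \<Rightarrow> 'a) set \<Rightarrow>
    (((rat \<Rightarrow> 'a) \<Rightarrow> (rat \<Rightarrow> 'a)) \<times> (rat \<Rightarrow> rat)) topology" where
  "dcAut_top X = topology_generated_by
     {{g \<in> dcAut X. (\<forall>x\<in>P. fst g x = fst h x) \<and> (\<forall>r\<in>R. snd g r = snd h r)} | h P R.
        h \<in> dcAut X \<and> finite P \<and> P \<subseteq> X \<and> finite R \<and> R \<subseteq> {0..}}"

definition dcAut_M_top :: "(rat \<Rightarrow> 'a) set \<Rightarrow>
    (((rat \<Rightarrow> 'a) \<Rightarrow> (rat \<Rightarrow> 'a)) \<times> (rat \<Rightarrow> rat)) topology" where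
  "dcAut_M_top X = topology_generated_by
     {{g \<in> dcAut X. \<forall>x\<in>A. vdist (fst g x) (fst h x) < r} | h A r.
        h \<in> dcAut X \<and> finite A \<and> A \<subseteq> X \<and> 0 < r}"

definition is_section :: "(rat \<Rightarrow> 'a) set \<Rightarrow>
    ((rat \<Rightarrow> rat) \<Rightarrow> ((rat \<Rightarrow> 'a) \<Rightarrow> (rat \<Rightarrow> 'a)) \<times> (rat \<Rightarrow> rat)) \<Rightarrow> bool" where
  "is_section X s \<longleftrightarrow> s \<in> hom autQ_group (dcAut_group X) \<and> (\<forall>\<phi>\<in>autQ. snd (s \<phi>) = \<phi>)"

end

theory Submission
  imports Defs
begin

text \<open>An order automorphism \<phi> of the nonnegative rationals acts on each of the four spaces by reparametrising
  the distance axis, \<open>f \<mapsto> f \<circ> \<phi>\<^sup>-\<^sup>1\<close>. This moves supports by \<phi>, so it preserves all four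
  support conditions, and it moves the largest point where two functions differ by \<phi>, so it is a
  dc-automorphism with \<open>D = \<phi>\<close>; the assignment is plainly multiplicative. Continuity comes from
  locality: \<open>f \<circ> \<psi>\<^sup>-\<^sup>1 = f \<circ> \<phi>\<^sup>-\<^sup>1\<close> as soon as \<psi> and \<phi> agree on the support of f, which is
  finite in \<open>V S\<close>; and the two agree at all heights \<open>\<ge> \<phi> c\<close> as soon as \<psi> and \<phi> agree at c and
  at the support points of f above c, of which there are finitely many in \<open>Vbar S\<close>.\<close>

lemma autQ_fixes_neg: "\<phi> \<in> autQ \<Longrightarrow> x < 0 \<Longrightarrow> \<phi> x = x"
  by (simp add: autQ_def)

lemma autQ_strict_mono:
  assumes "\<phi> \<in> autQ"
  shows "strict_mono \<phi>"
proof (rule strict_monoI)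
  have b: "bij_betw \<phi> {0..} {0..}" and sm: "strict_mono_on {0..} \<phi>"
    using assms by (simp_all add: autQ_def)
  fix x y :: rat
  assume "x < y"
  show "\<phi> x < \<phi> y"
  proof (cases "0 \<le> x")
    case True
    then show ?thesis
      using sm \<open>x < y\<close> by (simp add: strict_mono_on_def)
  next
    case False
    moreover have "0 \<le> \<phi> y" if "0 \<le> y"
      using b that by (auto simp: bij_betw_def)
    ultimately show ?thesis
      using autQ_fixes_neg[OF assms] \<open>x < y\<close> by (cases "0 \<le> y") auto
  qed
qed

lemma autQ_surj:
  assumes "\<phi> \<in> autQ"
  shows "surj \<phi>"
proof -
  have "y \<in> range \<phi>" for y :: rat
  proof (cases "0 \<le> y")
    case True
    then have "y \<in> \<phi> ` {0..}"
      using assms by (simp add: autQ_def bij_betw_def)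
    then show ?thesis
      by blast
  next
    case False
    then show ?thesis
      using autQ_fixes_neg[OF assms] by (metis not_le rangeI)
  qed
  then show ?thesis
    by blast
qed

lemma autQI:
  assumes sm: "strict_mono \<phi>" and su: "surj \<phi>" and neg: "\<And>x. x < 0 \<Longrightarrow> \<phi> x = x"
  shows "\<phi> \<in> autQ"
proof -
  have "\<not> \<phi> 0 < 0"
  proof
    assume "\<phi> 0 < 0"
    then have "\<phi> (\<phi> 0) = \<phi> 0"
      using neg by simp
    with \<open>\<phi> 0 < 0\<close> show False
      using strict_mono_eq[OF sm] by force
  qed
  moreover have "\<not> 0 < \<phi> 0"
  proof
    assume "0 < \<phi> 0"
    obtain a where "\<phi> a = 0"
      using su by (metis surjD)
    with \<open>0 < \<phi> 0\<close> have "a < 0"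
      using strict_mono_less[OF sm, of a 0] by simp
    with \<open>\<phi> a = 0\<close> show False
      using neg by simp
  qed
  ultimately have nonneg: "0 \<le> \<phi> x \<longleftrightarrow> 0 \<le> x" for x
    using strict_mono_less_eq[OF sm, of 0 x] by simp
  have "{0..} \<subseteq> \<phi> ` {0..}"
  proof
    fix y :: rat
    assume "y \<in> {0..}"
    moreover obtain x where "y = \<phi> x"
      using su by (metis surjD)
    ultimately show "y \<in> \<phi> ` {0..}"
      using nonneg by auto
  qed
  then have "bij_betw \<phi> {0..} {0..}"
    using nonneg strict_mono_imp_inj_on[OF sm] inj_on_subset by (auto simp: bij_betw_def)
  then show "\<phi> \<in> autQ"
    using sm neg by (simp add: autQ_def strict_mono_on_def strict_mono_def)
qed

lemma autQ_bij: "\<phi> \<in> autQ \<Longrightarrow> bij \<phi>"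
  by (simp add: autQ_strict_mono autQ_surj bij_def strict_mono_imp_inj_on)

lemma autQ_less_iff [simp]: "\<phi> \<in> autQ \<Longrightarrow> \<phi> x < \<phi> y \<longleftrightarrow> x < y"
  by (simp add: autQ_strict_mono strict_mono_less)

lemma autQ_le_iff [simp]: "\<phi> \<in> autQ \<Longrightarrow> \<phi> x \<le> \<phi> y \<longleftrightarrow> x \<le> y"
  by (simp add: autQ_strict_mono strict_mono_less_eq)

lemma autQ_inv_apply [simp]: "\<phi> \<in> autQ \<Longrightarrow> inv_into UNIV \<phi> (\<phi> x) = x"
  by (simp add: autQ_bij bij_is_inj)

lemma autQ_apply_inv [simp]: "\<phi> \<in> autQ \<Longrightarrow> \<phi> (inv_into UNIV \<phi> x) = x"
  by (simp add: autQ_bij bij_is_surj surj_f_inv_f)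

lemma autQ_zero [simp]: "\<phi> \<in> autQ \<Longrightarrow> \<phi> 0 = 0"
proof -
  assume \<phi>: "\<phi> \<in> autQ"
  then have b: "bij_betw \<phi> {0..} {0..}"
    by (simp add: autQ_def)
  then obtain a where "0 \<le> a" "\<phi> a = 0"
    by (metis atLeast_iff bij_betw_iff_bijections order_refl)
  moreover have "0 \<le> \<phi> 0"
    using b by (auto simp: bij_betw_def)
  ultimately show "\<phi> 0 = 0"
    using autQ_le_iff[OF \<phi>, of 0 a] by simp
qed

lemma autQ_pos_iff [simp]: "\<phi> \<in> autQ \<Longrightarrow> 0 < \<phi> x \<longleftrightarrow> 0 < x"
  using autQ_less_iff[of \<phi> 0 x] by simp

lemma id_in_autQ: "id \<in> autQ"
  by (rule autQI) (simp_all add: strict_mono_def)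

lemma autQ_inv:
  assumes "\<phi> \<in> autQ"
  shows "inv_into UNIV \<phi> \<in> autQ"
proof -
  have "strict_mono (inv_into UNIV \<phi>)"
  proof (rule strict_monoI)
    fix x y :: rat
    assume "x < y"
    then show "inv_into UNIV \<phi> x < inv_into UNIV \<phi> y"
      using autQ_less_iff[OF assms, of "inv_into UNIV \<phi> x" "inv_into UNIV \<phi> y"] assms by simp
  qed
  moreover have "surj (inv_into UNIV \<phi>)"
    using autQ_bij[OF assms] by (simp add: bij_imp_bij_inv bij_is_surj)
  moreover have "inv_into UNIV \<phi> x = x" if "x < 0" for x
    using autQ_inv_apply[OF assms, of x] autQ_fixes_neg[OF assms that] by simp
  ultimately show ?thesis
    by (rule autQI)
qed

text \<open>The paper's conversely well-ordered sets; this is what makes the maximum in vdist exist.\<close>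

definition rev_wellordered :: "'a::linorder set \<Rightarrow> bool" where
  "rev_wellordered A \<longleftrightarrow> (\<forall>B\<subseteq>A. B \<noteq> {} \<longrightarrow> (\<exists>m\<in>B. \<forall>y\<in>B. y \<le> m))"

lemma rev_wellordered_finite: "finite A \<Longrightarrow> rev_wellordered A"
  unfolding rev_wellordered_def by (metis Max_ge Max_in finite_subset)

lemma rev_wellordered_range_decseq:
  assumes "decseq a"
  shows "rev_wellordered (range a)"
  unfolding rev_wellordered_def
proof (intro allI impI)
  fix B
  assume B: "B \<subseteq> range a" "B \<noteq> {}"
  then have "\<exists>n. a n \<in> B"
    by blast
  then have first: "a (LEAST n. a n \<in> B) \<in> B"
    by (rule LeastI_ex)
  have "y \<le> a (LEAST n. a n \<in> B)" if "y \<in> B" for y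
  proof -
    obtain n where "y = a n"
      using B(1) \<open>y \<in> B\<close> by blast
    then show ?thesis
      using assms \<open>y \<in> B\<close> by (simp add: Least_le decseqD)
  qed
  with first show "\<exists>m\<in>B. \<forall>y\<in>B. y \<le> m"
    by blast
qed

lemma rev_wellordered_Un:
  assumes "rev_wellordered A" "rev_wellordered C"
  shows "rev_wellordered (A \<union> C)"
  unfolding rev_wellordered_def
proof (intro allI impI)
  fix B
  assume B: "B \<subseteq> A \<union> C" "B \<noteq> {}"
  have max_in: "\<exists>m\<in>B \<inter> E. \<forall>y\<in>B \<inter> E. y \<le> m" if "rev_wellordered E" "B \<inter> E \<noteq> {}" for E
    using that(1)[unfolded rev_wellordered_def, rule_format, of "B \<inter> E"] that(2) by blast
  consider "B \<inter> C = {}" | "B \<inter> A = {}" | "B \<inter> A \<noteq> {}" "B \<inter> C \<noteq> {}"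
    by blast
  then show "\<exists>m\<in>B. \<forall>y\<in>B. y \<le> m"
  proof cases
    case 1
    then show ?thesis
      using max_in[OF assms(1)] B by blast
  next
    case 2
    then show ?thesis
      using max_in[OF assms(2)] B by blast
  next
    case 3
    then obtain m1 m2 where m1: "m1 \<in> B \<inter> A" "\<forall>y\<in>B \<inter> A. y \<le> m1"
      and m2: "m2 \<in> B \<inter> C" "\<forall>y\<in>B \<inter> C. y \<le> m2"
      using max_in[OF assms(1) \<open>B \<inter> A \<noteq> {}\<close>] max_in[OF assms(2) \<open>B \<inter> C \<noteq> {}\<close>] by blast
    show ?thesis
    proof (intro bexI[of _ "max m1 m2"] ballI)
      fix y
      assume "y \<in> B"
      then have "y \<le> m1 \<or> y \<le> m2"
        using B(1) m1 m2 by blast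
      then show "y \<le> max m1 m2"
        by (simp add: le_max_iff_disj)
    qed (use m1 m2 in \<open>simp add: max_def\<close>)
  qed
qed

lemma rev_wellordered_if_wf:
  assumes "wf {(x, y). x \<in> A \<and> y \<in> A \<and> y < x}"
  shows "rev_wellordered A"
  unfolding rev_wellordered_def
proof (intro allI impI)
  fix B
  assume B: "B \<subseteq> A" "B \<noteq> {}"
  then obtain x where "x \<in> B"
    by blast
  from assms[unfolded wf_eq_minimal, rule_format, OF this]
  obtain z where z: "z \<in> B" and minimal: "\<forall>y. (y, z) \<in> {(x, y). x \<in> A \<and> y \<in> A \<and> y < x} \<longrightarrow> y \<notin> B"
    by blast
  have "y \<le> z" if "y \<in> B" for y
  proof (rule ccontr)
    assume "\<not> y \<le> z"
    then have "(y, z) \<in> {(x, y). x \<in> A \<and> y \<in> A \<and> y < x}"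
      using z that B(1) by auto
    then show False
      using minimal that by blast
  qed
  with z show "\<exists>m\<in>B. \<forall>y\<in>B. y \<le> m"
    by blast
qed

lemma supp_comp_inv:
  assumes "\<phi> \<in> autQ"
  shows "supp (f \<circ> inv_into UNIV \<phi>) = \<phi> ` supp f"
proof -
  have "r \<in> supp (f \<circ> inv_into UNIV \<phi>) \<longleftrightarrow> inv_into UNIV \<phi> r \<in> supp f" for r
    using autQ_pos_iff[OF assms, of "inv_into UNIV \<phi> r"] assms by (simp add: supp_def)
  moreover have "r \<in> \<phi> ` A \<longleftrightarrow> inv_into UNIV \<phi> r \<in> A" for r A
    using assms autQ_apply_inv autQ_inv_apply by (force simp: image_iff)
  ultimately show ?thesis
    by blast
qed

lemma Sfun_comp_inv:
  assumes "\<phi> \<in> autQ" "f \<in> Sfun S"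
  shows "f \<circ> inv_into UNIV \<phi> \<in> Sfun S"
  using assms(2) autQ_pos_iff[OF autQ_inv[OF assms(1)]] by (auto simp: Sfun_def not_less[symmetric])

lemma tendsto_of_rat_zero_iff:
  fixes a :: "nat \<Rightarrow> rat"
  assumes "\<And>n. 0 < a n"
  shows "(\<lambda>n. real_of_rat (a n)) \<longlonglongrightarrow> 0 \<longleftrightarrow> (\<forall>c>0. \<forall>\<^sub>F n in sequentially. a n < c)"
proof
  assume lim: "(\<lambda>n. real_of_rat (a n)) \<longlonglongrightarrow> 0"
  show "\<forall>c>0. \<forall>\<^sub>F n in sequentially. a n < c"
  proof (intro allI impI)
    fix c :: rat
    assume "0 < c"
    then have "\<forall>\<^sub>F n in sequentially. real_of_rat (a n) < real_of_rat c"
      using order_tendstoD(2)[OF lim] by simp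
    then show "\<forall>\<^sub>F n in sequentially. a n < c"
      by (simp add: of_rat_less)
  qed
next
  assume small: "\<forall>c>0. \<forall>\<^sub>F n in sequentially. a n < c"
  show "(\<lambda>n. real_of_rat (a n)) \<longlonglongrightarrow> 0"
  proof (rule order_tendstoI)
    fix y :: real
    assume "y < 0"
    then show "\<forall>\<^sub>F n in sequentially. y < real_of_rat (a n)"
      using assms by (simp add: order_less_trans)
  next
    fix y :: real
    assume "0 < y"
    then obtain q :: rat where q: "0 < real_of_rat q" "real_of_rat q < y"
      using of_rat_dense by blast
    then have "\<forall>\<^sub>F n in sequentially. a n < q"
      using small by simp
    then show "\<forall>\<^sub>F n in sequentially. real_of_rat (a n) < y"
      by eventually_elim (meson q(2) of_rat_less order_less_trans)
  qed
qed

lemma enumeration_of_supp_pos: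
  assumes "range a = supp f"
  shows "0 < a n"
proof -
  have "a n \<in> supp f"
    using assms by blast
  then show ?thesis
    by (simp add: supp_def)
qed

lemma V_comp_inv: "\<phi> \<in> autQ \<Longrightarrow> f \<in> V S \<Longrightarrow> f \<circ> inv_into UNIV \<phi> \<in> V S"
  by (simp add: V_def Sfun_comp_inv supp_comp_inv)

lemma decreasing_enumeration_comp:
  assumes "\<phi> \<in> autQ" "\<forall>n. a (Suc n) < a n" "range a = supp f"
  shows "\<forall>n. (\<phi> \<circ> a) (Suc n) < (\<phi> \<circ> a) n" "range (\<phi> \<circ> a) = supp (f \<circ> inv_into UNIV \<phi>)"
proof -
  show "\<forall>n. (\<phi> \<circ> a) (Suc n) < (\<phi> \<circ> a) n"
    using assms(1,2) by simp
  have "range (\<phi> \<circ> a) = \<phi> ` range a"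
    by (simp only: image_comp)
  also have "\<dots> = supp (f \<circ> inv_into UNIV \<phi>)"
    using assms(3) by (simp add: supp_comp_inv[OF assms(1)])
  finally show "range (\<phi> \<circ> a) = supp (f \<circ> inv_into UNIV \<phi>)" .
qed

lemma Vhat_comp_inv:
  assumes "\<phi> \<in> autQ" "f \<in> Vhat S"
  shows "f \<circ> inv_into UNIV \<phi> \<in> Vhat S"
proof (cases "finite (supp f)")
  case True
  then show ?thesis
    using assms by (simp add: Vhat_def Sfun_comp_inv supp_comp_inv)
next
  case False
  then obtain a where "\<forall>n. a (Suc n) < a n" "range a = supp f"
    using assms(2) by (auto simp: Vhat_def)
  then have "\<exists>b. (\<forall>n. b (Suc n) < b n) \<and> range b = supp (f \<circ> inv_into UNIV \<phi>)"
    using decreasing_enumeration_comp[OF assms(1)] by blast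
  moreover have "f \<circ> inv_into UNIV \<phi> \<in> Sfun S"
    using assms by (simp add: Vhat_def Sfun_comp_inv)
  ultimately show ?thesis
    by (simp add: Vhat_def)
qed

lemma Vbar_comp_inv:
  assumes "\<phi> \<in> autQ" "f \<in> Vbar S"
  shows "f \<circ> inv_into UNIV \<phi> \<in> Vbar S"
proof (cases "finite (supp f)")
  case True
  then show ?thesis
    using assms by (simp add: Vbar_def Sfun_comp_inv supp_comp_inv)
next
  case False
  then obtain a where dec: "\<forall>n. a (Suc n) < a n" and enum: "range a = supp f"
    and lim: "(\<lambda>n. real_of_rat (a n)) \<longlonglongrightarrow> 0"
    using assms(2) by (auto simp: Vbar_def)
  have pos: "0 < a n" for n
    using enum by (rule enumeration_of_supp_pos)
  have "\<forall>\<^sub>F n in sequentially. \<phi> (a n) < c" if "0 < c" for c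
  proof -
    have "0 < inv_into UNIV \<phi> c"
      using that autQ_pos_iff[OF autQ_inv[OF assms(1)]] by simp
    then have "\<forall>\<^sub>F n in sequentially. a n < inv_into UNIV \<phi> c"
      using lim tendsto_of_rat_zero_iff[of a] pos by blast
    then show ?thesis
      by eventually_elim (use assms(1) autQ_less_iff[of \<phi> _ "inv_into UNIV \<phi> c"] in simp)
  qed
  then have "(\<lambda>n. real_of_rat ((\<phi> \<circ> a) n)) \<longlonglongrightarrow> 0"
    using tendsto_of_rat_zero_iff[of "\<phi> \<circ> a"] pos assms(1) by simp
  then have "\<exists>b. (\<forall>n. b (Suc n) < b n) \<and> range b = supp (f \<circ> inv_into UNIV \<phi>) \<and>
      (\<lambda>n. real_of_rat (b n)) \<longlonglongrightarrow> 0"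
    using decreasing_enumeration_comp[OF assms(1) dec enum] by blast
  moreover have "f \<circ> inv_into UNIV \<phi> \<in> Sfun S"
    using assms by (simp add: Vbar_def Sfun_comp_inv)
  ultimately show ?thesis
    by (simp add: Vbar_def)
qed

lemma Vbb_comp_inv:
  assumes "\<phi> \<in> autQ" "f \<in> Vbb S"
  shows "f \<circ> inv_into UNIV \<phi> \<in> Vbb S"
proof -
  let ?A = "supp f"
  have "wf {(x, y). x \<in> ?A \<and> y \<in> ?A \<and> y < x}"
    using assms(2) by (simp add: Vbb_def)
  then have "wf (inv_image {(x, y). x \<in> ?A \<and> y \<in> ?A \<and> y < x} (inv_into UNIV \<phi>))"
    by simp
  moreover have "{(x, y). x \<in> \<phi> ` ?A \<and> y \<in> \<phi> ` ?A \<and> y < x}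
      \<subseteq> inv_image {(x, y). x \<in> ?A \<and> y \<in> ?A \<and> y < x} (inv_into UNIV \<phi>)"
    using assms(1) by auto
  ultimately have "wf {(x, y). x \<in> \<phi> ` ?A \<and> y \<in> \<phi> ` ?A \<and> y < x}"
    by (rule wf_subset)
  then show ?thesis
    using assms by (simp add: Vbb_def Sfun_comp_inv supp_comp_inv)
qed

lemma Vbar_subset_Vhat: "Vbar S \<subseteq> Vhat S"
  by (auto simp: Vbar_def Vhat_def)

lemma rev_wellordered_supp_Vhat:
  assumes "f \<in> Vhat S"
  shows "rev_wellordered (supp f)"
proof (cases "finite (supp f)")
  case True
  then show ?thesis
    by (rule rev_wellordered_finite)
next
  case False
  then obtain a where "\<forall>n. a (Suc n) < a n" "range a = supp f"
    using assms by (auto simp: Vhat_def)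
  moreover from this(1) have "decseq a"
    by (intro decseq_SucI less_imp_le) blast
  ultimately show ?thesis
    using rev_wellordered_range_decseq by metis
qed

lemma Vbar_finite_supp_above:
  assumes "f \<in> Vbar S" "0 < c"
  shows "finite {a \<in> supp f. c \<le> a}"
proof (cases "finite (supp f)")
  case True
  then show ?thesis
    by simp
next
  case False
  then obtain a where enum: "range a = supp f" and lim: "(\<lambda>n. real_of_rat (a n)) \<longlonglongrightarrow> 0"
    using assms(1) by (auto simp: Vbar_def)
  have "0 < a n" for n
    using enum by (rule enumeration_of_supp_pos)
  then have "\<forall>\<^sub>F n in sequentially. a n < c"
    using lim assms(2) tendsto_of_rat_zero_iff[of a] by blast
  then obtain N where N: "\<And>n. N \<le> n \<Longrightarrow> a n < c"
    by (auto simp: eventually_sequentially)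
  have "{x \<in> supp f. c \<le> x} \<subseteq> a ` {..<N}"
  proof
    fix x
    assume "x \<in> {x \<in> supp f. c \<le> x}"
    then have "x \<in> range a" "c \<le> x"
      by (simp_all add: enum)
    then obtain n where "x = a n" "c \<le> a n"
      by auto
    moreover have "n < N"
    proof (rule ccontr)
      assume "\<not> n < N"
      then have "a n < c"
        using N by simp
      then show False
        using \<open>c \<le> a n\<close> by simp
    qed
    ultimately show "x \<in> a ` {..<N}"
      by simp
  qed
  then show ?thesis
    by (rule finite_subset) simp
qed

lemma vdist_eqI:
  assumes "0 < m" "u m \<noteq> v m" "\<And>r. m < r \<Longrightarrow> u r = v r"
  shows "vdist u v = m"
proof -
  have "u \<noteq> v"
    using assms(2) by auto
  moreover have "(GREATEST r. 0 < r \<and> u r \<noteq> v r) = m"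
    using assms by (intro Greatest_equality) (auto simp: not_le[symmetric])
  ultimately show ?thesis
    by (simp add: vdist_def)
qed

locale autQ_stable_space =
  fixes X :: "(rat \<Rightarrow> 'a::zero) set"
  assumes vanishes_nonpos: "f \<in> X \<Longrightarrow> r \<le> 0 \<Longrightarrow> f r = 0"
    and rev_wellordered_supp: "f \<in> X \<Longrightarrow> rev_wellordered (supp f)"
    and comp_inv_closed: "\<phi> \<in> autQ \<Longrightarrow> f \<in> X \<Longrightarrow> f \<circ> inv_into UNIV \<phi> \<in> X"
begin

lemma greatest_disagreement:
  assumes "u \<in> X" "v \<in> X" "u \<noteq> v"
  obtains m where "0 < m" "u m \<noteq> v m" "\<And>r. m < r \<Longrightarrow> u r = v r"
proof -
  let ?D = "{r. 0 < r \<and> u r \<noteq> v r}"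
  obtain x where "u x \<noteq> v x"
    using assms(3) by auto
  moreover have "0 < x"
  proof (rule ccontr)
    assume "\<not> 0 < x"
    then have "u x = 0" "v x = 0"
      using assms(1,2) vanishes_nonpos by simp_all
    with \<open>u x \<noteq> v x\<close> show False
      by simp
  qed
  ultimately have "?D \<noteq> {}"
    by blast
  moreover have "?D \<subseteq> supp u \<union> supp v"
    by (auto simp: supp_def)
  ultimately obtain m where m: "m \<in> ?D" and maximal: "\<forall>r\<in>?D. r \<le> m"
    using rev_wellordered_Un[OF rev_wellordered_supp[OF assms(1)] rev_wellordered_supp[OF assms(2)]]
    unfolding rev_wellordered_def by blast
  show ?thesis
  proof (rule that)
    show "0 < m" "u m \<noteq> v m"
      using m by simp_all
    fix r
    assume "m < r"
    then have "r \<notin> ?D"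
      using maximal by (auto simp: not_le[symmetric])
    then show "u r = v r"
      using \<open>0 < m\<close> \<open>m < r\<close> by simp
  qed
qed

lemma vdist_less_iff:
  assumes "u \<in> X" "v \<in> X" "0 < r"
  shows "vdist u v < r \<longleftrightarrow> (\<forall>t\<ge>r. u t = v t)"
proof (cases "u = v")
  case True
  then show ?thesis
    using assms(3) by (simp add: vdist_def)
next
  case False
  then obtain m where m: "0 < m" "u m \<noteq> v m" "\<And>t. m < t \<Longrightarrow> u t = v t"
    using assms greatest_disagreement by blast
  then have "vdist u v = m"
    by (rule vdist_eqI)
  show ?thesis
  proof
    assume "vdist u v < r"
    then show "\<forall>t\<ge>r. u t = v t"
      using m(3) \<open>vdist u v = m\<close> by simp
  next
    assume agree: "\<forall>t\<ge>r. u t = v t"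
    show "vdist u v < r"
    proof (rule ccontr)
      assume "\<not> vdist u v < r"
      then show False
        using agree m(2) \<open>vdist u v = m\<close> by simp
    qed
  qed
qed

lemma vdist_comp_inv:
  assumes "\<phi> \<in> autQ" "f \<in> X" "g \<in> X"
  shows "vdist (f \<circ> inv_into UNIV \<phi>) (g \<circ> inv_into UNIV \<phi>) = \<phi> (vdist f g)"
proof (cases "f = g")
  case True
  then show ?thesis
    using assms(1) by (simp add: vdist_def)
next
  case False
  then obtain m where m: "0 < m" "f m \<noteq> g m" "\<And>r. m < r \<Longrightarrow> f r = g r"
    using assms greatest_disagreement by blast
  have "vdist (f \<circ> inv_into UNIV \<phi>) (g \<circ> inv_into UNIV \<phi>) = \<phi> m"
  proof (rule vdist_eqI)
    fix r
    assume "\<phi> m < r"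
    then have "m < inv_into UNIV \<phi> r"
      using autQ_less_iff[OF assms(1), of m "inv_into UNIV \<phi> r"] assms(1) by simp
    then show "(f \<circ> inv_into UNIV \<phi>) r = (g \<circ> inv_into UNIV \<phi>) r"
      using m(3) by simp
  qed (use assms(1) m in simp_all)
  moreover have "vdist f g = m"
    using m by (rule vdist_eqI)
  ultimately show ?thesis
    by simp
qed

end

definition reparam :: "(rat \<Rightarrow> 'a) set \<Rightarrow> (rat \<Rightarrow> rat) \<Rightarrow> ((rat \<Rightarrow> 'a) \<Rightarrow> (rat \<Rightarrow> 'a)) \<times> (rat \<Rightarrow> rat)"
  where "reparam X \<phi> = (\<lambda>f. if f \<in> X then f \<circ> inv_into UNIV \<phi> else f, \<phi>)"

lemma fst_reparam [simp]: "f \<in> X \<Longrightarrow> fst (reparam X \<phi>) f = f \<circ> inv_into UNIV \<phi>"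
  by (simp add: reparam_def)

lemma snd_reparam [simp]: "snd (reparam X \<phi>) = \<phi>"
  by (simp add: reparam_def)

context autQ_stable_space
begin

lemma reparam_in_dcAut:
  assumes "\<phi> \<in> autQ"
  shows "reparam X \<phi> \<in> dcAut X"
proof -
  have inv_inv: "inv_into UNIV (inv_into UNIV \<phi>) = \<phi>"
    using autQ_bij[OF assms] by (simp add: inv_inv_eq)
  have "bij_betw (\<lambda>f. if f \<in> X then f \<circ> inv_into UNIV \<phi> else f) X X"
  proof (rule bij_betwI[where g = "\<lambda>f. f \<circ> \<phi>"])
    show "(\<lambda>f. if f \<in> X then f \<circ> inv_into UNIV \<phi> else f) \<in> X \<rightarrow> X"
      using comp_inv_closed[OF assms] by simp
    show "(\<lambda>f. f \<circ> \<phi>) \<in> X \<rightarrow> X"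
      using comp_inv_closed[OF autQ_inv[OF assms]] inv_inv by simp
    fix f
    assume "f \<in> X"
    then show "(if f \<in> X then f \<circ> inv_into UNIV \<phi> else f) \<circ> \<phi> = f"
      using assms by (simp add: fun_eq_iff)
  next
    fix f
    assume "f \<in> X"
    then have "f \<circ> \<phi> \<in> X"
      using comp_inv_closed[OF autQ_inv[OF assms]] inv_inv by metis
    then show "(if f \<circ> \<phi> \<in> X then f \<circ> \<phi> \<circ> inv_into UNIV \<phi> else f \<circ> \<phi>) = f"
      using assms by (simp add: fun_eq_iff)
  qed
  then show ?thesis
    using assms vdist_comp_inv by (simp add: dcAut_def reparam_def)
qed

lemma is_section_reparam: "is_section X (reparam X)"
  unfolding is_section_def
proof
  show "reparam X \<in> hom autQ_group (dcAut_group X)"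
  proof (rule homI)
    fix \<phi>
    assume "\<phi> \<in> carrier autQ_group"
    then show "reparam X \<phi> \<in> carrier (dcAut_group X)"
      using reparam_in_dcAut by (simp add: autQ_group_def dcAut_group_def)
  next
    fix \<phi> \<psi>
    assume "\<phi> \<in> carrier autQ_group" "\<psi> \<in> carrier autQ_group"
    then have "\<phi> \<in> autQ" "\<psi> \<in> autQ"
      by (simp_all add: autQ_group_def)
    then have "inv_into UNIV (\<phi> \<circ> \<psi>) = inv_into UNIV \<psi> \<circ> inv_into UNIV \<phi>"
      by (simp add: autQ_bij o_inv_distrib)
    then show "reparam X (\<phi> \<otimes>\<^bsub>autQ_group\<^esub> \<psi>) = reparam X \<phi> \<otimes>\<^bsub>dcAut_group X\<^esub> reparam X \<psi>"
      using comp_inv_closed[OF \<open>\<psi> \<in> autQ\<close>]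
      by (simp add: autQ_group_def dcAut_group_def reparam_def fun_eq_iff)
  qed
qed simp

end

lemma topspace_autQ_top: "topspace autQ_top = autQ"
proof -
  have "autQ \<in> {{\<psi> \<in> autQ. \<forall>a\<in>A. \<psi> a = \<phi> a} | \<phi> A. \<phi> \<in> autQ \<and> finite A \<and> A \<subseteq> {0..}}"
    using id_in_autQ by blast
  then show ?thesis
    unfolding autQ_top_def topology_generated_by_topspace by blast
qed

lemma continuous_map_autQ_topI:
  assumes cover: "\<And>\<phi>. \<phi> \<in> autQ \<Longrightarrow> \<exists>U\<in>\<B>. s \<phi> \<in> U"
    and local_agreement: "\<And>U \<phi>. U \<in> \<B> \<Longrightarrow> \<phi> \<in> autQ \<Longrightarrow> s \<phi> \<in> U \<Longrightarrow>
      \<exists>A. finite A \<and> A \<subseteq> {0..} \<and> (\<forall>\<psi>\<in>autQ. (\<forall>a\<in>A. \<psi> a = \<phi> a) \<longrightarrow> s \<psi> \<in> U)"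
  shows "continuous_map autQ_top (topology_generated_by \<B>) s"
proof (rule continuous_on_generated_topo)
  show "s ` topspace autQ_top \<subseteq> \<Union> \<B>"
    using cover by (auto simp: topspace_autQ_top)
next
  fix U
  assume "U \<in> \<B>"
  show "openin autQ_top (s -` U \<inter> topspace autQ_top)"
    unfolding openin_subopen[of _ "s -` U \<inter> topspace autQ_top"]
  proof
    fix \<phi>
    assume "\<phi> \<in> s -` U \<inter> topspace autQ_top"
    then have "\<phi> \<in> autQ" "s \<phi> \<in> U"
      by (simp_all add: topspace_autQ_top)
    then obtain A where A: "finite A" "A \<subseteq> {0..}" and agree: "\<forall>\<psi>\<in>autQ. (\<forall>a\<in>A. \<psi> a = \<phi> a) \<longrightarrow> s \<psi> \<in> U"
      using local_agreement[OF \<open>U \<in> \<B>\<close> \<open>\<phi> \<in> autQ\<close> \<open>s \<phi> \<in> U\<close>] by blast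
    let ?T = "{\<psi> \<in> autQ. \<forall>a\<in>A. \<psi> a = \<phi> a}"
    have "openin autQ_top ?T"
      unfolding autQ_top_def by (rule topology_generated_by_Basis) (use \<open>\<phi> \<in> autQ\<close> A in blast)
    moreover have "?T \<subseteq> s -` U \<inter> topspace autQ_top"
      using agree by (auto simp: topspace_autQ_top)
    ultimately show "\<exists>T. openin autQ_top T \<and> \<phi> \<in> T \<and> T \<subseteq> s -` U \<inter> topspace autQ_top"
      using \<open>\<phi> \<in> autQ\<close> by blast
  qed
qed

lemma comp_inv_eq_at:
  assumes "bij \<phi>" "bij \<psi>"
    and agree: "\<And>a. x a \<noteq> 0 \<Longrightarrow> \<psi> a = t \<or> \<phi> a = t \<Longrightarrow> \<psi> a = \<phi> a"
  shows "x (inv_into UNIV \<psi> t) = x (inv_into UNIV \<phi> t)"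
proof -
  define a b where "a = inv_into UNIV \<psi> t" and "b = inv_into UNIV \<phi> t"
  have "\<psi> a = t" "\<phi> b = t"
    using assms(1,2) by (simp_all add: a_def b_def bij_is_surj surj_f_inv_f)
  consider "x a \<noteq> 0" | "x b \<noteq> 0" | "x a = 0" "x b = 0"
    by blast
  then have "x a = x b"
  proof cases
    case 1
    then have "\<phi> a = \<phi> b"
      using agree[OF 1] \<open>\<psi> a = t\<close> \<open>\<phi> b = t\<close> by simp
    then show ?thesis
      using assms(1) by (simp add: bij_is_inj inj_eq)
  next
    case 2
    then have "\<psi> b = \<psi> a"
      using agree[OF 2] \<open>\<psi> a = t\<close> \<open>\<phi> b = t\<close> by simp
    then show ?thesis
      using assms(2) by (simp add: bij_is_inj inj_eq)
  qed simp
  then show ?thesis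
    by (simp add: a_def b_def)
qed

context autQ_stable_space
begin

lemma nonzero_in_supp:
  assumes "f \<in> X" "f a \<noteq> 0"
  shows "a \<in> supp f"
proof -
  have "\<not> a \<le> 0"
    using assms vanishes_nonpos by blast
  with assms(2) show ?thesis
    by (simp add: supp_def)
qed

lemma comp_inv_eq_if_agree_on_supp:
  assumes "\<phi> \<in> autQ" "\<psi> \<in> autQ" "x \<in> X" "\<forall>a\<in>supp x. \<psi> a = \<phi> a"
  shows "x \<circ> inv_into UNIV \<psi> = x \<circ> inv_into UNIV \<phi>"
proof
  fix t
  show "(x \<circ> inv_into UNIV \<psi>) t = (x \<circ> inv_into UNIV \<phi>) t"
    unfolding comp_apply
    by (rule comp_inv_eq_at[OF autQ_bij[OF assms(1)] autQ_bij[OF assms(2)]])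
      (use assms(4) nonzero_in_supp[OF assms(3)] in blast)
qed

lemma continuous_reparam_dcAut_top:
  assumes finite_supp: "\<And>f. f \<in> X \<Longrightarrow> finite (supp f)"
  shows "continuous_map autQ_top (dcAut_top X) (reparam X)"
  unfolding dcAut_top_def
proof (rule continuous_map_autQ_topI, goal_cases)
  case (1 \<phi>)
  have "reparam X \<phi> \<in> {g \<in> dcAut X. (\<forall>x\<in>{}. fst g x = fst (reparam X \<phi>) x) \<and>
      (\<forall>r\<in>{}. snd g r = snd (reparam X \<phi>) r)}"
    using reparam_in_dcAut[OF 1] by simp
  then show ?case
    by blast
next
  case (2 U \<phi>)
  from 2(1) obtain h P R where U: "U = {g \<in> dcAut X. (\<forall>x\<in>P. fst g x = fst h x) \<and> (\<forall>r\<in>R. snd g r = snd h r)}"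
    and P: "finite P" "P \<subseteq> X" and R: "finite R" "R \<subseteq> {0..}"
    by blast
  let ?A = "R \<union> \<Union> (supp ` P)"
  have "finite ?A"
    using P R finite_supp by auto
  moreover have "?A \<subseteq> {0..}"
    using R by (auto simp: supp_def)
  moreover have "reparam X \<psi> \<in> U" if "\<psi> \<in> autQ" "\<forall>a\<in>?A. \<psi> a = \<phi> a" for \<psi>
  proof -
    have "x \<circ> inv_into UNIV \<psi> = x \<circ> inv_into UNIV \<phi>" if "x \<in> P" for x
      using comp_inv_eq_if_agree_on_supp[OF \<open>\<phi> \<in> autQ\<close> \<open>\<psi> \<in> autQ\<close>] \<open>\<forall>a\<in>?A. \<psi> a = \<phi> a\<close> that P(2)
      by blast
    moreover have "\<forall>x\<in>P. x \<circ> inv_into UNIV \<phi> = fst h x" "\<forall>r\<in>R. \<phi> r = snd h r"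
      using 2(3) P(2) by (auto simp: U subset_iff)
    ultimately show ?thesis
      using reparam_in_dcAut[OF that(1)] that(2) P(2) by (auto simp: U subset_iff)
  qed
  ultimately show ?case
    by (intro exI[of _ ?A]) blast
qed

lemma comp_inv_eq_above:
  assumes "\<phi> \<in> autQ" "\<psi> \<in> autQ" "x \<in> X"
    and "\<psi> c = \<phi> c" "\<forall>a\<in>supp x. c \<le> a \<longrightarrow> \<psi> a = \<phi> a" "\<phi> c \<le> t"
  shows "x (inv_into UNIV \<psi> t) = x (inv_into UNIV \<phi> t)"
proof (rule comp_inv_eq_at[OF autQ_bij[OF assms(1)] autQ_bij[OF assms(2)]])
  fix a
  assume "x a \<noteq> 0" "\<psi> a = t \<or> \<phi> a = t"
  then have "\<psi> c \<le> \<psi> a \<or> \<phi> c \<le> \<phi> a"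
    using assms(4,6) by auto
  then have "c \<le> a"
    using assms(1,2) by simp
  then show "\<psi> a = \<phi> a"
    using assms(5) nonzero_in_supp[OF assms(3) \<open>x a \<noteq> 0\<close>] by blast
qed

lemma vdist_comp_inv_less_if_agree_above:
  assumes "\<phi> \<in> autQ" "\<psi> \<in> autQ" "x \<in> X" "y \<in> X" "0 < c"
    and agree: "\<psi> c = \<phi> c" "\<forall>a\<in>supp x. c \<le> a \<longrightarrow> \<psi> a = \<phi> a"
    and "vdist (x \<circ> inv_into UNIV \<phi>) y < \<phi> c"
  shows "vdist (x \<circ> inv_into UNIV \<psi>) y < \<phi> c"
proof -
  have "0 < \<phi> c"
    using assms(1,5) by simp
  have "x \<circ> inv_into UNIV \<phi> \<in> X" "x \<circ> inv_into UNIV \<psi> \<in> X"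
    using comp_inv_closed assms(1-3) by simp_all
  note less_iff = vdist_less_iff[OF _ \<open>y \<in> X\<close> \<open>0 < \<phi> c\<close>]
  have "\<forall>t\<ge>\<phi> c. (x \<circ> inv_into UNIV \<phi>) t = y t"
    using less_iff[OF \<open>x \<circ> inv_into UNIV \<phi> \<in> X\<close>] assms(8) by simp
  moreover have "\<forall>t\<ge>\<phi> c. (x \<circ> inv_into UNIV \<psi>) t = (x \<circ> inv_into UNIV \<phi>) t"
    using comp_inv_eq_above[OF assms(1-3) agree] by simp
  ultimately show ?thesis
    using less_iff[OF \<open>x \<circ> inv_into UNIV \<psi> \<in> X\<close>] by simp
qed

lemma continuous_reparam_dcAut_M_top:
  assumes finite_supp_above: "\<And>f c. f \<in> X \<Longrightarrow> 0 < c \<Longrightarrow> finite {a \<in> supp f. c \<le> a}"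
  shows "continuous_map autQ_top (dcAut_M_top X) (reparam X)"
  unfolding dcAut_M_top_def
proof (rule continuous_map_autQ_topI, goal_cases)
  case (1 \<phi>)
  have "reparam X \<phi> \<in> {g \<in> dcAut X. \<forall>x\<in>{}. vdist (fst g x) (fst (reparam X \<phi>) x) < 1}"
    using reparam_in_dcAut[OF 1] by simp
  moreover have "(0::rat) < 1"
    by simp
  ultimately show ?case
    using reparam_in_dcAut[OF 1] by blast
next
  case (2 U \<phi>)
  from 2(1) obtain h A r where U: "U = {g \<in> dcAut X. \<forall>x\<in>A. vdist (fst g x) (fst h x) < r}"
    and h: "h \<in> dcAut X" and A: "finite A" "A \<subseteq> X" and "0 < r"
    by blast
  define c where "c = inv_into UNIV \<phi> r"
  have "0 < c" "\<phi> c = r"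
    using \<open>0 < r\<close> autQ_pos_iff[OF autQ_inv[OF 2(2)]] 2(2) by (simp_all add: c_def)
  let ?B = "insert c (\<Union>x\<in>A. {a \<in> supp x. c \<le> a})"
  have "finite ?B"
    using A finite_supp_above[OF _ \<open>0 < c\<close>] by (auto simp: subset_iff)
  moreover have "?B \<subseteq> {0..}"
    using \<open>0 < c\<close> by (auto simp: supp_def)
  moreover have "reparam X \<psi> \<in> U" if "\<psi> \<in> autQ" "\<forall>a\<in>?B. \<psi> a = \<phi> a" for \<psi>
  proof -
    have "vdist (x \<circ> inv_into UNIV \<psi>) (fst h x) < r" if "x \<in> A" for x
    proof -
      have "x \<in> X"
        using \<open>x \<in> A\<close> A(2) by blast
      then have "fst h x \<in> X"
        using h by (auto simp: dcAut_def bij_betw_def)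
      have "vdist (fst (reparam X \<phi>) x) (fst h x) < r"
        using 2(3) \<open>x \<in> A\<close> by (simp add: U)
      then show ?thesis
        using vdist_comp_inv_less_if_agree_above[OF 2(2) \<open>\<psi> \<in> autQ\<close> \<open>x \<in> X\<close> \<open>fst h x \<in> X\<close> \<open>0 < c\<close>]
          \<open>\<forall>a\<in>?B. \<psi> a = \<phi> a\<close> \<open>x \<in> A\<close> \<open>x \<in> X\<close> \<open>\<phi> c = r\<close> by simp
    qed
    then show ?thesis
      using reparam_in_dcAut[OF that(1)] A(2) by (auto simp: U subset_iff)
  qed
  ultimately show ?case
    by (intro exI[of _ ?B]) blast
qed

end

lemma autQ_stable_space_V: "autQ_stable_space (V S)"
proof unfold_locales
  show "f r = 0" if "f \<in> V S" "r \<le> 0" for f r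
    using that by (simp add: V_def Sfun_def)
  show "rev_wellordered (supp f)" if "f \<in> V S" for f
    using that by (simp add: V_def rev_wellordered_finite)
  show "f \<circ> inv_into UNIV \<phi> \<in> V S" if "\<phi> \<in> autQ" "f \<in> V S" for \<phi> f
    using that by (rule V_comp_inv)
qed

lemma autQ_stable_space_Vhat: "autQ_stable_space (Vhat S)"
proof unfold_locales
  show "f r = 0" if "f \<in> Vhat S" "r \<le> 0" for f r
    using that by (simp add: Vhat_def Sfun_def)
  show "rev_wellordered (supp f)" if "f \<in> Vhat S" for f
    using that by (rule rev_wellordered_supp_Vhat)
  show "f \<circ> inv_into UNIV \<phi> \<in> Vhat S" if "\<phi> \<in> autQ" "f \<in> Vhat S" for \<phi> f
    using that by (rule Vhat_comp_inv)
qed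

lemma autQ_stable_space_Vbar: "autQ_stable_space (Vbar S)"
proof unfold_locales
  show "f r = 0" if "f \<in> Vbar S" "r \<le> 0" for f r
    using that by (simp add: Vbar_def Sfun_def)
  show "rev_wellordered (supp f)" if "f \<in> Vbar S" for f
    using that Vbar_subset_Vhat by (blast intro: rev_wellordered_supp_Vhat)
  show "f \<circ> inv_into UNIV \<phi> \<in> Vbar S" if "\<phi> \<in> autQ" "f \<in> Vbar S" for \<phi> f
    using that by (rule Vbar_comp_inv)
qed

lemma autQ_stable_space_Vbb: "autQ_stable_space (Vbb S)"
proof unfold_locales
  show "f r = 0" if "f \<in> Vbb S" "r \<le> 0" for f r
    using that by (simp add: Vbb_def Sfun_def)
  show "rev_wellordered (supp f)" if "f \<in> Vbb S" for f
    using that by (simp add: Vbb_def rev_wellordered_if_wf)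
  show "f \<circ> inv_into UNIV \<phi> \<in> Vbb S" if "\<phi> \<in> autQ" "f \<in> Vbb S" for \<phi> f
    using that by (rule Vbb_comp_inv)
qed

theorem proposition3p26:
  fixes S :: "'a::zero set"
  assumes "0 \<in> S"
  shows "(\<exists>s. is_section (V S) s \<and> continuous_map autQ_top (dcAut_top (V S)) s)
       \<and> (\<exists>s. is_section (Vbar S) s \<and> continuous_map autQ_top (dcAut_M_top (Vbar S)) s)
       \<and> (\<exists>s. is_section (Vhat S) s)
       \<and> (\<exists>s. is_section (Vbb S) s)"
proof -
  interpret V: autQ_stable_space "V S"
    by (rule autQ_stable_space_V)
  interpret Vbar: autQ_stable_space "Vbar S"
    by (rule autQ_stable_space_Vbar)
  interpret Vhat: autQ_stable_space "Vhat S"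
    by (rule autQ_stable_space_Vhat)
  interpret Vbb: autQ_stable_space "Vbb S"
    by (rule autQ_stable_space_Vbb)
  have "continuous_map autQ_top (dcAut_top (V S)) (reparam (V S))"
    by (rule V.continuous_reparam_dcAut_top) (simp add: V_def)
  moreover have "continuous_map autQ_top (dcAut_M_top (Vbar S)) (reparam (Vbar S))"
    by (rule Vbar.continuous_reparam_dcAut_M_top) (rule Vbar_finite_supp_above)
  ultimately show ?thesis
    using V.is_section_reparam Vbar.is_section_reparam Vhat.is_section_reparam Vbb.is_section_reparam
    by blast
qed

end
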